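(* Let $n\ge1$ and $\mathbf s\in\mathbb C^n$. On the $YQ(1)$-module $V(\mathbf s)$ each $Z_{2i}$ ($i\ge0$) acts by a scalar $\chi_{2i}$, and $\sum_{i\ge0}\chi_{2i}u^{-2i-1}=\dfrac{\sum_{i\ge0}\sigma_{2i+1}(\mathbf s)u^{-2i-1}}{1+\sum_{i\ge1}\sigma_{2i}(\mathbf s)u^{-2i}}$, where $\sigma_p$ is the $p$-th elementary symmetric polynomial ($\sigma_p=0$ for $p>n$).
   Context: $YQ(1)$ is the unital superalgebra generated by $T_{i,j}^{(m)}$, $m\ge1$, $i,j\in\{\pm1\}$, of parity $p(i)+p(j)$ ($p(1)=0,p(-1)=1$), with $T_{i,j}(u)=\delta_{ij}+\sum_m T^{(m)}_{i,j}u^{-m}$ and defining relations $(u^2-v^2)[T_{i,j}(u),T_{k,l}(v)](-1)^{p(i)p(k)+p(i)p(l)+p(k)p(l)}=(u+v)(T_{k,j}(u)T_{i,l}(v)-T_{k,j}(v)T_{i,l}(u))-(u-v)(T_{-k,j}(u)T_{-i,l}(v)-T_{k,-j}(v)T_{i,-l}(u))(-1)^{p(k)+p(l)}$ and $T_{i,j}(-u)=T_{-i,-j}(u)$ (supercommutators). Set $\eta_i=(-\tfrac12)^i(\operatorname{ad}T^{(2)}_{1,1})^i(T^{(1)}_{1,-1})$ and $Z_{2i}=\tfrac12[\eta_0,\eta_{2i}]$ (central elements). Let $U(\mathfrak h_n)$ be the superalgebra generated by odd $\xi_1,\dots,\xi_n$ with $\xi_i\xi_j+\xi_j\xi_i=0$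 ($i\ne j$), $x_i=\xi_i^2$. There is a surjective homomorphism $\varphi_n:YQ(1)\to W^n\subset U(\mathfrak h_n)$ onto the principal finite $W$-algebra of $Q(n)$ with $\varphi_n(T^{(k)}_{1,1})=(-1)^k[\Sigma_k]_{even}$, $\varphi_n(T^{(k)}_{-1,1})=(-1)^k[\Sigma_k]_{odd}$, $\Sigma_k=\sum_{i_1<\dots<i_k}\prod_{j=1}^k(x_{i_j}+(-1)^{k-j}\xi_{i_j})$ ($0$ for $k>n$). $V(\mathbf s)$ is a simple $\mathbb Z_2$-graded $U(\mathfrak h_n)$-module with $x_i$ acting by $s_i$, made into a $YQ(1)$-module via $\varphi_n$. *)

theory Defs
  imports Main "HOL-Computational_Algebra.Formal_Power_Series"
begin

text \<open>A simple Z2-graded module V over U(h_n) on which x_i = xi_i^2 acts by s_i.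
  V is the carrier type 'v, a complex vector space via scale; the odd generators
  xi_i (i = 1..n) act by linear maps; the Z2-grading is encoded by the parity
  involution P (identity on V_0, minus identity on V_1).\<close>
definition simple_graded_module ::
  "(complex \<Rightarrow> 'v::ab_group_add \<Rightarrow> 'v) \<Rightarrow> nat \<Rightarrow> (nat \<Rightarrow> complex)
    \<Rightarrow> (nat \<Rightarrow> 'v \<Rightarrow> 'v) \<Rightarrow> ('v \<Rightarrow> 'v) \<Rightarrow> bool" where
  "simple_graded_module scale n s xi P \<longleftrightarrow>
     Vector_Spaces.vector_space scale
   \<and> (\<forall>i\<in>{1..n}. Vector_Spaces.linear scale scale (xi i))
   \<and> Vector_Spaces.linear scale scale P
   \<and> (\<forall>v. P (P v) = v)
   \<and> (\<forall>i\<in>{1..n}. \<forall>v. P (xi i v) = - xi i (P v))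
   \<and> (\<forall>i\<in>{1..n}. \<forall>j\<in>{1..n}. i \<noteq> j \<longrightarrow> (\<forall>v. xi i (xi j v) + xi j (xi i v) = 0))
   \<and> (\<forall>i\<in>{1..n}. \<forall>v. xi i (xi i v) = scale (s i) v)
   \<and> (\<exists>v::'v. v \<noteq> 0)
   \<and> (\<forall>W. module.subspace scale W \<and> (\<forall>i\<in>{1..n}. xi i ` W \<subseteq> W) \<and> P ` W \<subseteq> W
          \<longrightarrow> W = {0} \<or> W = UNIV)"

text \<open>Action of Sigma_k = sum_{i_1<...<i_k} prod_{j=1}^k (x_{i_j} + (-1)^(k-j) xi_{i_j})
  on V (ordered product = composition, leftmost factor applied last).\<close>
definition Sigma_op ::
  "(complex \<Rightarrow> 'v::ab_group_add \<Rightarrow> 'v) \<Rightarrow> nat \<Rightarrow> (nat \<Rightarrow> 'v \<Rightarrow> 'v) \<Rightarrow> nat \<Rightarrow> 'v \<Rightarrow> 'v" where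
  "Sigma_op scale n xi k = (\<lambda>v. \<Sum>S\<in>{S. S \<subseteq> {1..n} \<and> card S = k}.
      foldr (\<circ>)
        (map (\<lambda>(j, i). (\<lambda>w. xi i (xi i w) + scale ((-1) ^ (k - Suc j)) (xi i w)))
             (zip [0..<k] (sorted_list_of_set S)))
        id v)"

definition even_part :: "(complex \<Rightarrow> 'v::ab_group_add \<Rightarrow> 'v) \<Rightarrow> ('v \<Rightarrow> 'v) \<Rightarrow> ('v \<Rightarrow> 'v) \<Rightarrow> 'v \<Rightarrow> 'v" where
  "even_part scale P A = (\<lambda>v. scale (1/2) (A v + P (A (P v))))"

definition odd_part :: "(complex \<Rightarrow> 'v::ab_group_add \<Rightarrow> 'v) \<Rightarrow> ('v \<Rightarrow> 'v) \<Rightarrow> ('v \<Rightarrow> 'v) \<Rightarrow> 'v \<Rightarrow> 'v" where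
  "odd_part scale P A = (\<lambda>v. scale (1/2) (A v - P (A (P v))))"

definition phiT11 where
  "phiT11 scale n xi P k = (\<lambda>v. scale ((-1) ^ k) (even_part scale P (Sigma_op scale n xi k) v))"

definition phiTm11 where
  "phiTm11 scale n xi P k = (\<lambda>v. scale ((-1) ^ k) (odd_part scale P (Sigma_op scale n xi k) v))"

text \<open>T_{1,-1}(u) = T_{-1,1}(-u), hence T^(m)_{1,-1} = (-1)^m T^(m)_{-1,1}.\<close>
definition phiT1m1 where
  "phiT1m1 scale n xi P m = (\<lambda>v. scale ((-1) ^ m) (phiTm11 scale n xi P m v))"

text \<open>eta_i = (-1/2)^i (ad T^(2)_{1,1})^i (T^(1)_{1,-1}) acting on V
  (T^(2)_{1,1} is even, so ad is the ordinary commutator).\<close>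
definition eta_op where
  "eta_op scale n xi P i = (\<lambda>v. scale ((-1/2) ^ i)
      (((\<lambda>B w. phiT11 scale n xi P 2 (B w) - B (phiT11 scale n xi P 2 w)) ^^ i)
         (phiT1m1 scale n xi P 1) v))"

text \<open>Z_{2i} = 1/2 [eta_0, eta_{2i}]; both are odd, so the supercommutator is the anticommutator.\<close>
definition Z_op where
  "Z_op scale n xi P i = (\<lambda>v. scale (1/2)
      (eta_op scale n xi P 0 (eta_op scale n xi P (2*i) v)
       + eta_op scale n xi P (2*i) (eta_op scale n xi P 0 v)))"

definition elem_sym :: "nat \<Rightarrow> (nat \<Rightarrow> complex) \<Rightarrow> nat \<Rightarrow> complex" where
  "elem_sym n s p = (\<Sum>S\<in>{S. S \<subseteq> {1..n} \<and> card S = p}. \<Prod>i\<in>S. s i)"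

end

theory Submission
  imports Defs
begin

unbundle fps_syntax

(* Under phi_n, T^(1)_{1,-1} acts as the sum of the xi_k and T^(2)_{1,1} as sigma_2 minus the
   sum of the xi_i xi_j with i < j.  Commuting the latter with a combination sum_k a_k xi_k gives
   again such a combination, so every eta_p = sum_k c_p(k) xi_k with coefficients given by a
   linear recursion, and Z_2i = 1/2 [eta_0, eta_2i] acts by sum_k s_k c_2i(k), because
   xi_k xi_l + xi_l xi_k = 2 delta_kl s_k.
   With the formal variable X standing for u^-1, the generating functions y_k of the c_p(k)
   satisfy y_k = 1 + X (sum_{l>k} s_l y_l - sum_{l<k} s_l y_l).  Put
   g_l = prod_{j<l} (1 - s_j X) prod_{j>=l} (1 + s_j X), so that g_1 = E + O and g_(n+1) = E - O
   for the even and odd parts E, O of prod_j (1 + s_j X).  Since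
   g_l - g_(l+1) = s_l X (g_l + g_(l+1)), telescoping shows that y_k = (g_k + g_(k+1)) / 2E
   solves the recursion, and then X sum_k s_k y_k telescopes to (g_1 - g_(n+1)) / 2E = O / E. *)

section \<open>The coefficients of eta and their generating function\<close>

lemma fps_const_prod: "(\<Prod>k\<in>A. fps_const (c k)) = fps_const (\<Prod>k\<in>A. c k :: 'a::comm_ring_1)"
  by (induction A rule: infinite_finite_induct) simp_all

lemma prod_linear_fps_nth:
  fixes c :: "'b \<Rightarrow> 'a::comm_ring_1"
  assumes "finite I"
  shows "(\<Prod>k\<in>I. 1 + fps_const (c k) * fps_X) $ p = (\<Sum>A | A \<subseteq> I \<and> card A = p. \<Prod>k\<in>A. c k)"
proof -
  have "(\<Prod>k\<in>I. 1 + fps_const (c k) * fps_X) = (\<Prod>k\<in>I. fps_const (c k) * fps_X + 1)"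
    by (simp add: add.commute)
  also have "\<dots> = (\<Sum>A\<in>Pow I. fps_const (\<Prod>k\<in>A. c k) * fps_X ^ card A)"
    by (simp add: prod_add[OF assms] prod.distrib fps_const_prod)
  finally have "(\<Prod>k\<in>I. 1 + fps_const (c k) * fps_X) $ p
      = (\<Sum>A\<in>Pow I. if p = card A then \<Prod>k\<in>A. c k else 0)"
    by (simp add: fps_sum_nth if_distrib[where f = "\<lambda>x. _ * x"] cong: if_cong)
  also have "\<dots> = (\<Sum>A | A \<subseteq> I \<and> card A = p. \<Prod>k\<in>A. c k)"
    using assms by (simp add: sum.inter_filter[symmetric] Pow_def eq_commute)
  finally show ?thesis .
qed

lemma sum_telescope_interval:
  fixes g :: "nat \<Rightarrow> 'a::ab_group_add"
  assumes "m \<le> m'"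
  shows "(\<Sum>l\<in>{m..<m'}. g l - g (Suc l)) = g m - g m'"
  using assms by (induction rule: dec_induct) (simp_all add: algebra_simps)

lemma telescope_two_sided:
  fixes g :: "nat \<Rightarrow> 'a::ab_group_add"
  assumes "k \<in> {1..n}"
  shows "g k + g (Suc k) = g 1 + g (Suc n)
           + (\<Sum>l\<in>{l\<in>{1..n}. k < l}. g l - g (Suc l)) - (\<Sum>l\<in>{l\<in>{1..n}. l < k}. g l - g (Suc l))"
proof -
  have "{l\<in>{1..n}. k < l} = {Suc k..<Suc n}" "{l\<in>{1..n}. l < k} = {1..<k}"
    using assms by auto
  moreover have "Suc k \<le> Suc n" "1 \<le> k"
    using assms by auto
  ultimately show ?thesis
    by (simp only: sum_telescope_interval) (simp add: algebra_simps)
qed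

(* [sum_{i<j} xi_i xi_j, sum_k a_k xi_k] = sum_k 2 (ad_step n s a k) xi_k  (xi_pairs_commutator),
   hence eta_p = sum_k (eta_coeff n s p k) xi_k  (eta_op_eq). *)
definition ad_step :: "nat \<Rightarrow> (nat \<Rightarrow> 'a::comm_ring) \<Rightarrow> (nat \<Rightarrow> 'a) \<Rightarrow> nat \<Rightarrow> 'a" where
  "ad_step n s a k = (\<Sum>l\<in>{l\<in>{1..n}. k < l}. s l * a l) - (\<Sum>l\<in>{l\<in>{1..n}. l < k}. s l * a l)"

definition eta_coeff :: "nat \<Rightarrow> (nat \<Rightarrow> 'a::comm_ring_1) \<Rightarrow> nat \<Rightarrow> nat \<Rightarrow> 'a" where
  "eta_coeff n s p = (ad_step n s ^^ p) (\<lambda>_. 1)"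

lemma eta_coeff_0 [simp]: "eta_coeff n s 0 = (\<lambda>_. 1)"
  by (simp add: eta_coeff_def)

lemma eta_coeff_Suc: "eta_coeff n s (Suc p) = ad_step n s (eta_coeff n s p)"
  by (simp add: eta_coeff_def)

lemma ad_step_cmult: "ad_step n s (\<lambda>l. c * a l) k = c * ad_step n s a k"
  by (simp add: ad_step_def sum_distrib_left right_diff_distrib mult.left_commute)

lemma ad_step_cong:
  assumes "\<And>l. l \<in> {1..n} \<Longrightarrow> a l = b l"
  shows "ad_step n s a k = ad_step n s b k"
  using assms unfolding ad_step_def by (intro arg_cong2[where f = minus] sum.cong) auto

lemma ad_step_fps_nth: "ad_step n (\<lambda>l. fps_const (s l)) y k $ p = ad_step n s (\<lambda>l. y l $ p) k"
  by (simp add: ad_step_def fps_sum_nth)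

lemma fps_nth_eq_eta_coeff:
  assumes rec: "\<And>k. k \<in> {1..n} \<Longrightarrow> y k = 1 + fps_X * ad_step n (\<lambda>l. fps_const (s l)) y k"
    and "k \<in> {1..n}"
  shows "y k $ p = eta_coeff n s p k"
  using \<open>k \<in> {1..n}\<close>
proof (induction p arbitrary: k)
  case 0
  then show ?case by (subst rec) simp_all
next
  case (Suc p)
  have "y k $ Suc p = ad_step n s (\<lambda>l. y l $ p) k"
    using Suc.prems by (subst rec) (simp_all add: ad_step_fps_nth)
  also have "\<dots> = ad_step n s (eta_coeff n s p) k"
    using Suc by (intro ad_step_cong) simp_all
  finally show ?case by (simp add: eta_coeff_Suc)
qed

context
  fixes n :: nat and s :: "nat \<Rightarrow> complex"
begin

definition elem_sym_even_fps :: "complex fps" where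
  "elem_sym_even_fps = Abs_fps (\<lambda>m. if even m then elem_sym n s m else 0)"

definition elem_sym_odd_fps :: "complex fps" where
  "elem_sym_odd_fps = Abs_fps (\<lambda>m. if odd m then elem_sym n s m else 0)"

definition mixed_sign_prod :: "nat \<Rightarrow> complex fps" where
  "mixed_sign_prod l =
     (\<Prod>j\<in>{1..<l}. 1 - fps_const (s j) * fps_X) * (\<Prod>j\<in>{l..n}. 1 + fps_const (s j) * fps_X)"

lemma mixed_sign_prod_first: "mixed_sign_prod 1 = elem_sym_even_fps + elem_sym_odd_fps"
proof (rule fps_ext)
  fix p
  have "mixed_sign_prod 1 $ p = elem_sym n s p"
    by (simp add: mixed_sign_prod_def prod_linear_fps_nth elem_sym_def)
  then show "mixed_sign_prod 1 $ p = (elem_sym_even_fps + elem_sym_odd_fps) $ p"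
    by (simp add: elem_sym_even_fps_def elem_sym_odd_fps_def)
qed

lemma mixed_sign_prod_last: "mixed_sign_prod (Suc n) = elem_sym_even_fps - elem_sym_odd_fps"
proof (rule fps_ext)
  fix p
  have "mixed_sign_prod (Suc n) = (\<Prod>j\<in>{1..n}. 1 + fps_const (- s j) * fps_X)"
    by (simp add: mixed_sign_prod_def atLeastLessThanSuc_atLeastAtMost flip: fps_const_neg)
  then have "mixed_sign_prod (Suc n) $ p = (\<Sum>A | A \<subseteq> {1..n} \<and> card A = p. \<Prod>j\<in>A. - s j)"
    by (simp add: prod_linear_fps_nth)
  also have "\<dots> = (-1) ^ p * elem_sym n s p"
    unfolding elem_sym_def sum_distrib_left by (intro sum.cong) (auto simp: prod_uminus)
  finally show "mixed_sign_prod (Suc n) $ p = (elem_sym_even_fps - elem_sym_odd_fps) $ p"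
    by (simp add: elem_sym_even_fps_def elem_sym_odd_fps_def)
qed

lemma mixed_sign_prod_step:
  assumes "k \<in> {1..n}"
  shows "mixed_sign_prod k - mixed_sign_prod (Suc k)
           = fps_const (s k) * fps_X * (mixed_sign_prod k + mixed_sign_prod (Suc k))"
proof -
  define L where "L = (\<Prod>j\<in>{1..<k}. 1 - fps_const (s j) * fps_X)"
  define R where "R = (\<Prod>j\<in>{Suc k..n}. 1 + fps_const (s j) * fps_X)"
  have "mixed_sign_prod k = L * (1 + fps_const (s k) * fps_X) * R"
    using assms by (simp add: mixed_sign_prod_def L_def R_def prod.atLeast_Suc_atMost mult.assoc)
  moreover have "mixed_sign_prod (Suc k) = L * (1 - fps_const (s k) * fps_X) * R"
    using assms by (simp add: mixed_sign_prod_def L_def R_def prod.atLeastLessThan_Suc)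
  ultimately show ?thesis by (simp add: algebra_simps)
qed

lemma mixed_sign_pair_sum_rec:
  assumes k: "k \<in> {1..n}"
  defines "h \<equiv> \<lambda>l. mixed_sign_prod l + mixed_sign_prod (Suc l)"
  shows "h k = 2 * elem_sym_even_fps + fps_X * ad_step n (\<lambda>l. fps_const (s l)) h k"
proof -
  have step: "mixed_sign_prod l - mixed_sign_prod (Suc l) = fps_X * (fps_const (s l) * h l)"
    if "l \<in> {1..n}" for l
    unfolding mixed_sign_prod_step[OF that] h_def by (simp only: mult_ac)
  have step_sum: "(\<Sum>l\<in>L. mixed_sign_prod l - mixed_sign_prod (Suc l))
      = fps_X * (\<Sum>l\<in>L. fps_const (s l) * h l)" if "L \<subseteq> {1..n}" for L
    unfolding sum_distrib_left using that by (intro sum.cong refl step) auto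
  have ends: "mixed_sign_prod 1 + mixed_sign_prod (Suc n) = 2 * elem_sym_even_fps"
    unfolding mixed_sign_prod_first mixed_sign_prod_last by (simp only: mult_2) (simp add: algebra_simps)
  have "h k = mixed_sign_prod 1 + mixed_sign_prod (Suc n)
      + (\<Sum>l\<in>{l\<in>{1..n}. k < l}. mixed_sign_prod l - mixed_sign_prod (Suc l))
      - (\<Sum>l\<in>{l\<in>{1..n}. l < k}. mixed_sign_prod l - mixed_sign_prod (Suc l))"
    unfolding h_def by (rule telescope_two_sided[OF k])
  also have "\<dots> = 2 * elem_sym_even_fps + fps_X * ad_step n (\<lambda>l. fps_const (s l)) h k"
    unfolding ends ad_step_def right_diff_distrib by (subst (1 2) step_sum) auto
  finally show ?thesis .
qed

lemma elem_sym_even_fps_nth_0: "elem_sym_even_fps $ 0 = 1"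
proof -
  have "{A. A \<subseteq> {1..n} \<and> card A = 0} = {{}}"
    by (auto dest: finite_subset)
  then show ?thesis by (simp add: elem_sym_even_fps_def elem_sym_def)
qed

lemma inverse_double_elem_sym_even_mult:
  "inverse (2 * elem_sym_even_fps) * (2 * f) = f * inverse elem_sym_even_fps"
proof -
  have "inverse 2 * 2 = (1 :: complex fps)"
    by (rule inverse_mult_eq_1) (simp add: numeral_fps_const)
  then show ?thesis
    by (simp add: fps_inverse_mult mult_ac)
qed

lemma eta_coeff_gf:
  assumes "k \<in> {1..n}"
  shows "Abs_fps (\<lambda>p. eta_coeff n s p k)
           = inverse (2 * elem_sym_even_fps) * (mixed_sign_prod k + mixed_sign_prod (Suc k))"
proof -
  define c where "c = inverse (2 * elem_sym_even_fps)"
  define y where "y = (\<lambda>l. c * (mixed_sign_prod l + mixed_sign_prod (Suc l)))"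
  have "elem_sym_even_fps * inverse elem_sym_even_fps = 1"
    by (rule inverse_mult_eq_1') (simp add: elem_sym_even_fps_nth_0)
  then have c_even: "c * (2 * elem_sym_even_fps) = 1"
    by (simp add: c_def inverse_double_elem_sym_even_mult)
  have "y k = 1 + fps_X * ad_step n (\<lambda>l. fps_const (s l)) y k" if "k \<in> {1..n}" for k
  proof -
    have "y k = c * (2 * elem_sym_even_fps + fps_X * ad_step n (\<lambda>l. fps_const (s l))
                  (\<lambda>l. mixed_sign_prod l + mixed_sign_prod (Suc l)) k)"
      using mixed_sign_pair_sum_rec[OF that] by (simp add: y_def)
    also have "\<dots> = 1 + fps_X * ad_step n (\<lambda>l. fps_const (s l)) y k"
      unfolding y_def ad_step_cmult unfolding distrib_left c_even by (simp only: mult.left_commute)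
    finally show ?thesis .
  qed
  then have "y k $ p = eta_coeff n s p k" for p
    by (rule fps_nth_eq_eta_coeff[OF _ assms])
  then show ?thesis
    by (simp add: fps_eq_iff y_def c_def)
qed

lemma eta_coeff_generating_function:
  "fps_X * (\<Sum>k\<in>{1..n}. fps_const (s k) * Abs_fps (\<lambda>p. eta_coeff n s p k))
     = elem_sym_odd_fps * inverse elem_sym_even_fps"
proof -
  have "fps_X * (\<Sum>k\<in>{1..n}. fps_const (s k) * Abs_fps (\<lambda>p. eta_coeff n s p k))
      = inverse (2 * elem_sym_even_fps) * (\<Sum>k\<in>{1..n}. mixed_sign_prod k - mixed_sign_prod (Suc k))"
    by (simp add: eta_coeff_gf mixed_sign_prod_step sum_distrib_left mult_ac)
  also have "(\<Sum>k\<in>{1..n}. mixed_sign_prod k - mixed_sign_prod (Suc k))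
      = mixed_sign_prod 1 - mixed_sign_prod (Suc n)"
    using sum_telescope_interval[of 1 "Suc n" mixed_sign_prod]
    by (simp add: atLeastLessThanSuc_atLeastAtMost)
  also have "\<dots> = 2 * elem_sym_odd_fps"
    unfolding mixed_sign_prod_first mixed_sign_prod_last by (simp only: mult_2) (simp add: algebra_simps)
  finally show ?thesis
    by (simp add: inverse_double_elem_sym_even_mult)
qed

lemma elem_sym_quotient_even_nth:
  assumes "even m"
  shows "(elem_sym_odd_fps * inverse elem_sym_even_fps) $ m = 0"
proof -
  let ?F = "elem_sym_odd_fps * inverse elem_sym_even_fps"
  have even_refl: "elem_sym_even_fps oo - fps_X = elem_sym_even_fps"
    by (simp add: fps_compose_uminus' fps_eq_iff elem_sym_even_fps_def)
  have odd_refl: "elem_sym_odd_fps oo - fps_X = - elem_sym_odd_fps"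
    by (simp add: fps_compose_uminus' fps_eq_iff elem_sym_odd_fps_def)
  have "?F oo - fps_X = (elem_sym_odd_fps oo - fps_X) * (inverse elem_sym_even_fps oo - fps_X)"
    by (simp add: fps_compose_mult_distrib)
  also have "inverse elem_sym_even_fps oo - fps_X = inverse elem_sym_even_fps"
    using fps_inverse_compose[of "- fps_X" elem_sym_even_fps]
    by (simp add: even_refl elem_sym_even_fps_nth_0)
  finally have "?F oo - fps_X = - ?F"
    by (simp add: odd_refl)
  then have "(-1) ^ m * ?F $ m = - ?F $ m"
    unfolding fps_compose_uminus' by (metis fps_neg_nth fps_nth_Abs_fps)
  with assms show ?thesis by simp
qed

lemma odd_coeffs_generating_function:
  "Abs_fps (\<lambda>m. if odd m then \<Sum>k\<in>{1..n}. s k * eta_coeff n s (2 * (m div 2)) k else 0)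
     = elem_sym_odd_fps * inverse elem_sym_even_fps"
proof (rule fps_ext)
  fix m
  show "Abs_fps (\<lambda>m. if odd m then \<Sum>k\<in>{1..n}. s k * eta_coeff n s (2 * (m div 2)) k else 0) $ m
      = (elem_sym_odd_fps * inverse elem_sym_even_fps) $ m"
  proof (cases "odd m")
    case True
    then obtain p where "m = Suc (2 * p)"
      by (metis oddE Suc_eq_plus1)
    then show ?thesis
      unfolding eta_coeff_generating_function[symmetric] by (simp add: fps_sum_nth)
  next
    case False
    then show ?thesis by (simp add: elem_sym_quotient_even_nth)
  qed
qed

end

section \<open>The action on a graded Clifford module\<close>

lemma card2_subsets_eq_image:
  fixes A :: "'a::linorder set"
  shows "{S. S \<subseteq> A \<and> card S = 2} = (\<lambda>(i, j). {i, j}) ` (SIGMA i:A. {j\<in>A. i < j})"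
proof (intro equalityI subsetI)
  fix S assume "S \<in> {S. S \<subseteq> A \<and> card S = 2}"
  then obtain a b where S: "S = {a, b}" "a \<noteq> b" "a \<in> A" "b \<in> A"
    by (auto simp: card_2_iff)
  show "S \<in> (\<lambda>(i, j). {i, j}) ` (SIGMA i:A. {j\<in>A. i < j})"
  proof (cases "a < b")
    case True
    with S show ?thesis by (auto intro!: image_eqI[where x = "(a, b)"])
  next
    case False
    with S show ?thesis by (auto intro!: image_eqI[where x = "(b, a)"])
  qed
qed auto

lemma inj_on_doubleton_upper:
  fixes A :: "'a::linorder set"
  shows "inj_on (\<lambda>(i, j). {i, j}) (SIGMA i:A. {j\<in>A. i < j})"
  by (auto simp: inj_on_def doubleton_eq_iff)

lemma sorted_list_of_set_doubleton: "i < j \<Longrightarrow> sorted_list_of_set {i, j} = [i, j]"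
  by (auto simp: sorted_list_of_set_unique[symmetric])

locale graded_clifford_module = vector_space scale
  for scale :: "complex \<Rightarrow> 'v::ab_group_add \<Rightarrow> 'v" +
  fixes n :: nat and s :: "nat \<Rightarrow> complex" and xi :: "nat \<Rightarrow> 'v \<Rightarrow> 'v" and P :: "'v \<Rightarrow> 'v"
  assumes xi_linear: "i \<in> {1..n} \<Longrightarrow> Vector_Spaces.linear scale scale (xi i)"
    and P_linear: "Vector_Spaces.linear scale scale P"
    and P_P: "P (P v) = v"
    and P_xi: "i \<in> {1..n} \<Longrightarrow> P (xi i v) = - xi i (P v)"
    and xi_anticomm: "i \<in> {1..n} \<Longrightarrow> j \<in> {1..n} \<Longrightarrow> i \<noteq> j \<Longrightarrow> xi i (xi j v) + xi j (xi i v) = 0"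
    and xi_xi: "i \<in> {1..n} \<Longrightarrow> xi i (xi i v) = scale (s i) v"
begin

lemma xi_hom: "i \<in> {1..n} \<Longrightarrow> module_hom scale scale (xi i)"
  using xi_linear module_hom_iff_linear by blast

lemma P_hom: "module_hom scale scale P"
  using P_linear module_hom_iff_linear by blast

lemmas xi_add = module_hom.add[OF xi_hom]
  and xi_scale = module_hom.scale[OF xi_hom]
  and xi_neg = module_hom.neg[OF xi_hom]
  and xi_sum = module_hom.sum[OF xi_hom]
  and P_add = module_hom.add[OF P_hom]
  and P_diff = module_hom.diff[OF P_hom]
  and P_scale = module_hom.scale[OF P_hom]
  and P_sum = module_hom.sum[OF P_hom]

lemma xi_swap: "i \<in> {1..n} \<Longrightarrow> j \<in> {1..n} \<Longrightarrow> i \<noteq> j \<Longrightarrow> xi i (xi j v) = - xi j (xi i v)"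
  using xi_anticomm[of i j v] by (simp add: eq_neg_iff_add_eq_0)

lemma scale_double: "scale (2 * c) x = scale c x + scale c x"
  unfolding mult_2 by (rule scale_left_distrib)

lemma scale_half_double: "scale (1/2) (x + x) = x"
  using scale_double[of "1/2" x] by (simp add: scale_right_distrib)

definition xi_comb :: "(nat \<Rightarrow> complex) \<Rightarrow> 'v \<Rightarrow> 'v" where
  "xi_comb a v = (\<Sum>k\<in>{1..n}. scale (a k) (xi k v))"

definition xi_pairs :: "'v \<Rightarrow> 'v" where
  "xi_pairs v = (\<Sum>i\<in>{1..n}. \<Sum>j\<in>{j\<in>{1..n}. i < j}. xi i (xi j v))"

lemma xi_comb_hom: "module_hom scale scale (xi_comb a)"
  unfolding module_hom_iff
  by (simp add: module_axioms xi_comb_def xi_add xi_scale scale_right_distrib sum.distrib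
      scale_sum_right mult.commute)

lemmas xi_comb_diff = module_hom.diff[OF xi_comb_hom]
  and xi_comb_scale = module_hom.scale[OF xi_comb_hom]
  and xi_comb_sum = module_hom.sum[OF xi_comb_hom]

lemma Sigma_op_1: "Sigma_op scale n xi 1 v = (\<Sum>i\<in>{1..n}. scale (s i) v + xi i v)"
proof -
  have "{S. S \<subseteq> {1..n} \<and> card S = 1} = (\<lambda>i. {i}) ` {1..n}"
    by (auto simp: card_1_singleton_iff)
  then show ?thesis
    unfolding Sigma_op_def by (simp add: sum.reindex xi_xi)
qed

lemma phiT1m1_1: "phiT1m1 scale n xi P 1 = xi_comb (\<lambda>_. 1)"
proof
  fix v
  have "P (Sigma_op scale n xi 1 (P v)) = (\<Sum>i\<in>{1..n}. scale (s i) v - xi i v)"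
    unfolding Sigma_op_1 P_sum by (intro sum.cong) (auto simp: P_add P_scale P_P P_xi)
  then have "odd_part scale P (Sigma_op scale n xi 1) v = scale (1/2) (\<Sum>i\<in>{1..n}. xi i v + xi i v)"
    unfolding odd_part_def Sigma_op_1 by (simp add: sum_subtractf[symmetric])
  then show "phiT1m1 scale n xi P 1 v = xi_comb (\<lambda>_. 1) v"
    by (simp add: phiT1m1_def phiTm11_def xi_comb_def sum.distrib scale_half_double)
qed

lemma Sigma_op_2:
  "Sigma_op scale n xi 2 v = (\<Sum>i\<in>{1..n}. \<Sum>j\<in>{j\<in>{1..n}. i < j}.
     scale (s i * s j) v + scale (s i) (xi j v) - scale (s j) (xi i v) - xi i (xi j v))"
proof -
  let ?pairs = "SIGMA i:{1..n}. {j\<in>{1..n}. i < j}"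
  have "Sigma_op scale n xi 2 v = (\<Sum>(i, j)\<in>?pairs. xi i (xi i (xi j (xi j v) + xi j v)) - xi i (xi j (xi j v) + xi j v))"
    unfolding Sigma_op_def card2_subsets_eq_image sum.reindex[OF inj_on_doubleton_upper]
    by (intro sum.cong refl) (auto simp: sorted_list_of_set_doubleton numeral_2_eq_2)
  also have "\<dots> = (\<Sum>(i, j)\<in>?pairs.
      scale (s i * s j) v + scale (s i) (xi j v) - scale (s j) (xi i v) - xi i (xi j v))"
    by (intro sum.cong refl) (auto simp: xi_xi xi_add xi_scale scale_right_distrib)
  finally show ?thesis by (simp add: sum.Sigma)
qed

lemma phiT11_2:
  "phiT11 scale n xi P 2 v = scale (\<Sum>i\<in>{1..n}. \<Sum>j\<in>{j\<in>{1..n}. i < j}. s i * s j) v - xi_pairs v"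
proof -
  have "P (Sigma_op scale n xi 2 (P v)) = (\<Sum>i\<in>{1..n}. \<Sum>j\<in>{j\<in>{1..n}. i < j}.
      scale (s i * s j) v - scale (s i) (xi j v) + scale (s j) (xi i v) - xi i (xi j v))"
    unfolding Sigma_op_2 P_sum
    by (intro sum.cong refl) (auto simp: P_add P_diff P_scale P_P P_xi xi_neg)
  then have "even_part scale P (Sigma_op scale n xi 2) v = scale (1/2) (\<Sum>i\<in>{1..n}. \<Sum>j\<in>{j\<in>{1..n}. i < j}.
      (scale (s i * s j) v - xi i (xi j v)) + (scale (s i * s j) v - xi i (xi j v)))"
    unfolding even_part_def Sigma_op_2 by (simp add: sum.distrib[symmetric] algebra_simps)
  also have "\<dots> = (\<Sum>i\<in>{1..n}. \<Sum>j\<in>{j\<in>{1..n}. i < j}. scale (s i * s j) v - xi i (xi j v))"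
    by (simp only: sum.distrib scale_half_double)
  finally show ?thesis
    by (simp add: phiT11_def xi_pairs_def sum_subtractf scale_sum_left)
qed

lemma xi_triple_commutator:
  assumes "i \<in> {1..n}" "j \<in> {1..n}" "k \<in> {1..n}" "i \<noteq> j"
  shows "xi i (xi j (xi k v)) - xi k (xi i (xi j v))
           = (if k = j then scale (2 * s j) (xi i v) else 0) - (if k = i then scale (2 * s i) (xi j v) else 0)"
proof -
  consider "k = i" | "k = j" | "k \<noteq> i" "k \<noteq> j" by blast
  then show ?thesis
  proof cases
    case 1
    with assms show ?thesis by (simp add: xi_swap[of j i] xi_neg xi_xi scale_double)
  next
    case 2
    with assms show ?thesis by (simp add: xi_swap[of j i] xi_neg xi_xi xi_scale scale_double)
  next
    case 3
    with assms show ?thesis by (simp add: xi_swap[of j k] xi_swap[of i k] xi_neg)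
  qed
qed

lemma xi_pair_commutator:
  assumes "i \<in> {1..n}" "j \<in> {1..n}" "i \<noteq> j"
  shows "xi i (xi j (xi_comb a v)) - xi_comb a (xi i (xi j v))
           = scale (2 * s j * a j) (xi i v) - scale (2 * s i * a i) (xi j v)"
proof -
  have "xi i (xi j (xi_comb a v)) - xi_comb a (xi i (xi j v))
      = (\<Sum>k\<in>{1..n}. scale (a k) (xi i (xi j (xi k v)) - xi k (xi i (xi j v))))"
    using assms by (simp add: xi_comb_def xi_sum xi_scale sum_subtractf scale_right_diff_distrib)
  also have "\<dots> = (\<Sum>k\<in>{1..n}. (if k = j then scale (2 * s j * a j) (xi i v) else 0)
                                - (if k = i then scale (2 * s i * a i) (xi j v) else 0))"
    using assms by (intro sum.cong refl) (auto simp: xi_triple_commutator scale_right_diff_distrib mult.commute)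
  finally show ?thesis
    using assms by (simp add: sum_subtractf)
qed

lemma xi_pairs_commutator:
  "xi_pairs (xi_comb a v) - xi_comb a (xi_pairs v) = xi_comb (\<lambda>m. 2 * ad_step n s a m) v"
proof -
  have "xi_pairs (xi_comb a v) - xi_comb a (xi_pairs v)
      = (\<Sum>i\<in>{1..n}. \<Sum>j\<in>{j\<in>{1..n}. i < j}. xi i (xi j (xi_comb a v)) - xi_comb a (xi i (xi j v)))"
    by (simp add: xi_pairs_def xi_comb_sum sum_subtractf)
  also have "\<dots> = (\<Sum>i\<in>{1..n}. \<Sum>j\<in>{j\<in>{1..n}. i < j}. scale (2 * s j * a j) (xi i v))
      - (\<Sum>i\<in>{1..n}. \<Sum>j\<in>{j\<in>{1..n}. i < j}. scale (2 * s i * a i) (xi j v))"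
    unfolding sum_subtractf[symmetric] by (intro sum.cong refl) (auto simp: xi_pair_commutator)
  also have "(\<Sum>i\<in>{1..n}. \<Sum>j\<in>{j\<in>{1..n}. i < j}. scale (2 * s i * a i) (xi j v))
      = (\<Sum>j\<in>{1..n}. \<Sum>i\<in>{i\<in>{1..n}. i < j}. scale (2 * s i * a i) (xi j v))"
    by (rule sum.swap_restrict) simp_all
  also have "(\<Sum>i\<in>{1..n}. \<Sum>j\<in>{j\<in>{1..n}. i < j}. scale (2 * s j * a j) (xi i v))
      - (\<Sum>j\<in>{1..n}. \<Sum>i\<in>{i\<in>{1..n}. i < j}. scale (2 * s i * a i) (xi j v))
      = xi_comb (\<lambda>m. 2 * ad_step n s a m) v"
    by (simp add: xi_comb_def ad_step_def scale_sum_left sum_distrib_left right_diff_distrib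
        scale_left_diff_distrib sum_subtractf mult.assoc)
  finally show ?thesis .
qed

lemma ad_phiT11_xi_comb:
  "phiT11 scale n xi P 2 (xi_comb a v) - xi_comb a (phiT11 scale n xi P 2 v)
     = xi_comb (\<lambda>m. -2 * ad_step n s a m) v"
proof -
  have "phiT11 scale n xi P 2 (xi_comb a v) - xi_comb a (phiT11 scale n xi P 2 v)
      = - (xi_pairs (xi_comb a v) - xi_comb a (xi_pairs v))"
    by (simp add: phiT11_2 xi_comb_diff xi_comb_scale)
  then show ?thesis
    unfolding xi_pairs_commutator by (simp add: xi_comb_def sum_negf[symmetric])
qed

lemma ad_phiT11_power:
  "((\<lambda>B w. phiT11 scale n xi P 2 (B w) - B (phiT11 scale n xi P 2 w)) ^^ p) (phiT1m1 scale n xi P 1)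
     = xi_comb (\<lambda>k. (-2) ^ p * eta_coeff n s p k)"
proof (induction p)
  case 0
  show ?case using phiT1m1_1 by simp
next
  case (Suc p)
  show ?case
    unfolding funpow.simps comp_def Suc.IH
    by (simp add: fun_eq_iff ad_phiT11_xi_comb ad_step_cmult eta_coeff_Suc mult.assoc)
qed

lemma eta_op_eq: "eta_op scale n xi P p = xi_comb (eta_coeff n s p)"
proof
  fix v
  have "(-1/2) ^ p * (-2) ^ p = (1 :: complex)"
    by (simp add: power_mult_distrib[symmetric])
  then show "eta_op scale n xi P p v = xi_comb (eta_coeff n s p) v"
    using ad_phiT11_power[of p]
    by (simp add: eta_op_def xi_comb_def scale_sum_right mult.assoc[symmetric])
qed

lemma xi_comb_anticommutator:
  "xi_comb a (xi_comb b v) + xi_comb b (xi_comb a v) = scale (2 * (\<Sum>k\<in>{1..n}. s k * a k * b k)) v"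
proof -
  have ab: "xi_comb a (xi_comb b v) = (\<Sum>k\<in>{1..n}. \<Sum>l\<in>{1..n}. scale (a k * b l) (xi k (xi l v)))"
    unfolding xi_comb_def by (intro sum.cong refl) (auto simp: xi_sum xi_scale scale_sum_right)
  have "xi_comb b (xi_comb a v) = (\<Sum>l\<in>{1..n}. \<Sum>k\<in>{1..n}. scale (b l * a k) (xi l (xi k v)))"
    unfolding xi_comb_def by (intro sum.cong refl) (auto simp: xi_sum xi_scale scale_sum_right)
  also have "\<dots> = (\<Sum>k\<in>{1..n}. \<Sum>l\<in>{1..n}. scale (a k * b l) (xi l (xi k v)))"
    by (subst sum.swap) (simp add: mult.commute)
  finally have "xi_comb a (xi_comb b v) + xi_comb b (xi_comb a v)
      = (\<Sum>k\<in>{1..n}. \<Sum>l\<in>{1..n}. scale (a k * b l) (xi k (xi l v) + xi l (xi k v)))"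
    unfolding ab by (simp add: sum.distrib[symmetric] scale_right_distrib)
  also have "\<dots> = (\<Sum>k\<in>{1..n}. \<Sum>l\<in>{1..n}. if l = k then scale (2 * s k * a k * b k) v else 0)"
    by (intro sum.cong refl) (auto simp: xi_anticomm xi_xi scale_double[symmetric] mult_ac)
  finally show ?thesis
    by (simp add: scale_sum_left sum_distrib_left mult.assoc)
qed

lemma Z_op_eq: "Z_op scale n xi P i v = scale (\<Sum>k\<in>{1..n}. s k * eta_coeff n s (2 * i) k) v"
  using xi_comb_anticommutator[of "\<lambda>_. 1" "eta_coeff n s (2 * i)" v]
  by (simp add: Z_op_def eta_op_eq)

end

lemma simple_graded_module_imp_graded_clifford_module:
  assumes "simple_graded_module scale n s xi P"
  shows "graded_clifford_module scale n s xi P"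
  using assms
  by (auto simp: simple_graded_module_def graded_clifford_module_def graded_clifford_module_axioms_def)

theorem corollary5p5:
  fixes scale :: "complex \<Rightarrow> 'v::ab_group_add \<Rightarrow> 'v"
    and n :: nat and s :: "nat \<Rightarrow> complex"
    and xi :: "nat \<Rightarrow> 'v \<Rightarrow> 'v" and P :: "'v \<Rightarrow> 'v"
  assumes "n \<ge> 1"
    and "simple_graded_module scale n s xi P"
  shows "\<exists>\<chi> :: nat \<Rightarrow> complex.
           (\<forall>i v. Z_op scale n xi P i v = scale (\<chi> i) v)
         \<and> Abs_fps (\<lambda>m. if odd m then \<chi> (m div 2) else 0)
             = Abs_fps (\<lambda>m. if odd m then elem_sym n s m else 0)
               * inverse (Abs_fps (\<lambda>m. if even m then elem_sym n s m else 0))"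
proof -
  interpret graded_clifford_module scale n s xi P
    using assms(2) by (rule simple_graded_module_imp_graded_clifford_module)
  show ?thesis
  proof (intro exI conjI allI)
    show "Z_op scale n xi P i v = scale (\<Sum>k\<in>{1..n}. s k * eta_coeff n s (2 * i) k) v" for i v
      by (rule Z_op_eq)
    show "Abs_fps (\<lambda>m. if odd m then (\<lambda>i. \<Sum>k\<in>{1..n}. s k * eta_coeff n s (2 * i) k) (m div 2) else 0)
        = Abs_fps (\<lambda>m. if odd m then elem_sym n s m else 0)
          * inverse (Abs_fps (\<lambda>m. if even m then elem_sym n s m else 0))"
      using odd_coeffs_generating_function[where n = n and s = s]
      by (simp add: elem_sym_odd_fps_def elem_sym_even_fps_def)
  qed
qed

end
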